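(* Let $H$ be a Hopf algebra with antipode $S$, projective as a $k$-module, $A$ a left $H$-comodule algebra, and $\varphi:H\to A$ a left $H$-colinear map. Define $\gamma^\varphi:H\to\mathrm{Hom}(H,A)$ by $\gamma^\varphi(h)(l)=\varphi(hS(l))$. Then $\gamma^\varphi$ is an $A$-integral for the Doi-Hopf datum $(H,A,H)$ if and only if $\rho_A(\varphi(H))\subseteq Z(H\otimes A)$, the center of the tensor product algebra $H\otimes A$. Moreover, $\varphi(1_H)=1_A$ if and only if $\gamma^\varphi$ satisfies the normalization $\sum\gamma^\varphi(h_{(1)})(h_{(2)})=\varepsilon(h)1_A$ for all $h\in H$.
   Context: $k$ commutative ring; Sweedler notation $\Delta(h)=\sum h_{(1)}\otimes h_{(2)}$, $\rho_A(a)=\sum a_{<-1>}\otimes a_{<0>}$. $A$ is a left $H$-comodule algebra (coaction $\rho_A$ an algebra map). The Doi-Hopf datum $(H,A,H)$ uses $C=H$ with right $H$-action by multiplication. An $A$-integral for it is a $k$-linear $\gamma:H\to\mathrm{Hom}(H,A)$ such that for all $a\in A$, $c,d\in H$: (i) $\sum a_{<0>}\gamma(ca_{<-2>})(da_{<-1>})=\gamma(c)(d)\,a$; (ii) $\sum c_{(1)}\otimes\gamma(c_{(2)})(d)=\sum d_{(2)}\gamma(c)(d_{(1)})_{<-1>}\otimes\gamma(c)(d_{(1)})_{<0>}$. *)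

theory Defs
  imports Complex_Main
begin

text \<open>An element of X (x)_k Y is represented by a list of pairs [(x1,y1),...,(xn,yn)],
  standing for the sum of pure tensors x1(x)y1 + ... + xn(x)yn (every element of the
  tensor product has this form, scalars being absorbed into the factors).
  Two lists represent the same element iff their formal difference in the free
  k-module on X x Y lies in the k-submodule generated by the bilinearity relations,
  i.e. this is literally the standard construction of the tensor product.\<close>

definition dl :: "'p \<Rightarrow> 'p \<Rightarrow> 'k::comm_ring_1" where
  "dl q p = (if p = q then 1 else 0)"

inductive_set tzero2 ::
  "('k::comm_ring_1 \<Rightarrow> 'x::ab_group_add \<Rightarrow> 'x) \<Rightarrow> ('k \<Rightarrow> 'y::ab_group_add \<Rightarrow> 'y)
   \<Rightarrow> ('x \<times> 'y \<Rightarrow> 'k) set"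
  for sx sy where
  z: "(\<lambda>p. 0) \<in> tzero2 sx sy"
| add: "u \<in> tzero2 sx sy \<Longrightarrow> v \<in> tzero2 sx sy \<Longrightarrow> (\<lambda>p. u p + v p) \<in> tzero2 sx sy"
| smult: "u \<in> tzero2 sx sy \<Longrightarrow> (\<lambda>p. c * u p) \<in> tzero2 sx sy"
| addL: "(\<lambda>p. dl (x + x', y) p - dl (x, y) p - dl (x', y) p) \<in> tzero2 sx sy"
| addR: "(\<lambda>p. dl (x, y + y') p - dl (x, y) p - dl (x, y') p) \<in> tzero2 sx sy"
| scL: "(\<lambda>p. dl (sx c x, y) p - c * dl (x, y) p) \<in> tzero2 sx sy"
| scR: "(\<lambda>p. dl (x, sy c y) p - c * dl (x, y) p) \<in> tzero2 sx sy"

inductive_set tzero3 ::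
  "('k::comm_ring_1 \<Rightarrow> 'x::ab_group_add \<Rightarrow> 'x) \<Rightarrow> ('k \<Rightarrow> 'y::ab_group_add \<Rightarrow> 'y)
   \<Rightarrow> ('k \<Rightarrow> 'z::ab_group_add \<Rightarrow> 'z) \<Rightarrow> ('x \<times> 'y \<times> 'z \<Rightarrow> 'k) set"
  for sx sy sz where
  z: "(\<lambda>p. 0) \<in> tzero3 sx sy sz"
| add: "u \<in> tzero3 sx sy sz \<Longrightarrow> v \<in> tzero3 sx sy sz \<Longrightarrow> (\<lambda>p. u p + v p) \<in> tzero3 sx sy sz"
| smult: "u \<in> tzero3 sx sy sz \<Longrightarrow> (\<lambda>p. c * u p) \<in> tzero3 sx sy sz"
| add1: "(\<lambda>p. dl (x + x', y, w) p - dl (x, y, w) p - dl (x', y, w) p) \<in> tzero3 sx sy sz"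
| add2: "(\<lambda>p. dl (x, y + y', w) p - dl (x, y, w) p - dl (x, y', w) p) \<in> tzero3 sx sy sz"
| add3: "(\<lambda>p. dl (x, y, w + w') p - dl (x, y, w) p - dl (x, y, w') p) \<in> tzero3 sx sy sz"
| sc1: "(\<lambda>p. dl (sx c x, y, w) p - c * dl (x, y, w) p) \<in> tzero3 sx sy sz"
| sc2: "(\<lambda>p. dl (x, sy c y, w) p - c * dl (x, y, w) p) \<in> tzero3 sx sy sz"
| sc3: "(\<lambda>p. dl (x, y, sz c w) p - c * dl (x, y, w) p) \<in> tzero3 sx sy sz"

text \<open>Formal sum (element of the free k-module) of a list of generators.\<close>
definition fsum :: "'p list \<Rightarrow> 'p \<Rightarrow> 'k::comm_ring_1" where
  "fsum xs p = of_nat (count_list xs p)"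

text \<open>Equality in X (x)_k Y, resp. X (x)_k Y (x)_k Z, of the represented elements.\<close>
definition teq2 ::
  "('k::comm_ring_1 \<Rightarrow> 'x::ab_group_add \<Rightarrow> 'x) \<Rightarrow> ('k \<Rightarrow> 'y::ab_group_add \<Rightarrow> 'y)
   \<Rightarrow> ('x \<times> 'y) list \<Rightarrow> ('x \<times> 'y) list \<Rightarrow> bool" where
  "teq2 sx sy xs ys \<longleftrightarrow> (\<lambda>p. fsum xs p - fsum ys p) \<in> tzero2 sx sy"

definition teq3 ::
  "('k::comm_ring_1 \<Rightarrow> 'x::ab_group_add \<Rightarrow> 'x) \<Rightarrow> ('k \<Rightarrow> 'y::ab_group_add \<Rightarrow> 'y)
   \<Rightarrow> ('k \<Rightarrow> 'z::ab_group_add \<Rightarrow> 'z)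
   \<Rightarrow> ('x \<times> 'y \<times> 'z) list \<Rightarrow> ('x \<times> 'y \<times> 'z) list \<Rightarrow> bool" where
  "teq3 sx sy sz xs ys \<longleftrightarrow> (\<lambda>p. fsum xs p - fsum ys p) \<in> tzero3 sx sy sz"

text \<open>Multiplication in the tensor product algebra X (x) Y (on representatives).\<close>
definition tmul2 :: "('x::times \<times> 'y::times) list \<Rightarrow> ('x \<times> 'y) list \<Rightarrow> ('x \<times> 'y) list" where
  "tmul2 t u = [(x * x', y * y'). (x, y) \<leftarrow> t, (x', y') \<leftarrow> u]"

definition k_algebra :: "('k::comm_ring_1 \<Rightarrow> 'b::ring_1 \<Rightarrow> 'b) \<Rightarrow> bool" where
  "k_algebra s \<longleftrightarrow> module s \<and>
     (\<forall>c x y. s c (x * y) = s c x * y \<and> s c (x * y) = x * s c y)"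

text \<open>Projective k-module: the canonical surjection from the free module k^(M) onto M
  splits, i.e. there are linear coordinate functionals f x (x in M) with finite support
  and y = sum_x f x y *s x  (dual basis lemma).\<close>
definition projective_module :: "('k::comm_ring_1 \<Rightarrow> 'b::ab_group_add \<Rightarrow> 'b) \<Rightarrow> bool" where
  "projective_module s \<longleftrightarrow> module s \<and>
     (\<exists>f :: 'b \<Rightarrow> 'b \<Rightarrow> 'k. (\<forall>x. module_hom s (*) (f x)) \<and>
        (\<forall>y. finite {x. f x y \<noteq> 0} \<and> y = (\<Sum>x\<in>{x. f x y \<noteq> 0}. s (f x y) x)))"

text \<open>Hopf algebra (H, mult, 1, Delta, eps, S) over k; Delta h is a representative of
  sum h_(1) (x) h_(2).\<close>
definition hopf_algebra ::
  "('k::comm_ring_1 \<Rightarrow> 'h::ring_1 \<Rightarrow> 'h) \<Rightarrow> ('h \<Rightarrow> ('h \<times> 'h) list) \<Rightarrow> ('h \<Rightarrow> 'k)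
   \<Rightarrow> ('h \<Rightarrow> 'h) \<Rightarrow> bool" where
  "hopf_algebra s Delta eps S \<longleftrightarrow>
     k_algebra s \<and>
     (\<forall>x y. teq2 s s (Delta (x + y)) (Delta x @ Delta y)) \<and>
     (\<forall>c x. teq2 s s (Delta (s c x)) (map (\<lambda>(a, b). (s c a, b)) (Delta x))) \<and>
     module_hom s (*) eps \<and>
     (\<forall>h. teq3 s s s [(a1, a2, b). (a, b) \<leftarrow> Delta h, (a1, a2) \<leftarrow> Delta a]
                     [(a, b1, b2). (a, b) \<leftarrow> Delta h, (b1, b2) \<leftarrow> Delta b]) \<and>
     (\<forall>h. sum_list (map (\<lambda>(a, b). s (eps a) b) (Delta h)) = h) \<and>
     (\<forall>h. sum_list (map (\<lambda>(a, b). s (eps b) a) (Delta h)) = h) \<and>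
     (\<forall>x y. teq2 s s (Delta (x * y)) (tmul2 (Delta x) (Delta y))) \<and>
     teq2 s s (Delta 1) [(1, 1)] \<and>
     (\<forall>x y. eps (x * y) = eps x * eps y) \<and> eps 1 = 1 \<and>
     module_hom s s S \<and>
     (\<forall>h. sum_list (map (\<lambda>(a, b). S a * b) (Delta h)) = s (eps h) 1) \<and>
     (\<forall>h. sum_list (map (\<lambda>(a, b). a * S b) (Delta h)) = s (eps h) 1)"

text \<open>Left H-comodule algebra A; rho a is a representative of sum a_<-1> (x) a_<0>.\<close>
definition comodule_algebra ::
  "('k::comm_ring_1 \<Rightarrow> 'h::ring_1 \<Rightarrow> 'h) \<Rightarrow> ('h \<Rightarrow> ('h \<times> 'h) list) \<Rightarrow> ('h \<Rightarrow> 'k)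
   \<Rightarrow> ('k \<Rightarrow> 'a::ring_1 \<Rightarrow> 'a) \<Rightarrow> ('a \<Rightarrow> ('h \<times> 'a) list) \<Rightarrow> bool" where
  "comodule_algebra sh Delta eps sa rho \<longleftrightarrow>
     k_algebra sa \<and>
     (\<forall>x y. teq2 sh sa (rho (x + y)) (rho x @ rho y)) \<and>
     (\<forall>c x. teq2 sh sa (rho (sa c x)) (map (\<lambda>(a, b). (sh c a, b)) (rho x))) \<and>
     (\<forall>a. teq3 sh sh sa [(x1, x2, b). (x, b) \<leftarrow> rho a, (x1, x2) \<leftarrow> Delta x]
                        [(x, y, e). (x, b) \<leftarrow> rho a, (y, e) \<leftarrow> rho b]) \<and>
     (\<forall>a. sum_list (map (\<lambda>(x, b). sa (eps x) b) (rho a)) = a) \<and>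
     (\<forall>x y. teq2 sh sa (rho (x * y)) (tmul2 (rho x) (rho y))) \<and>
     teq2 sh sa (rho 1) [(1, 1)]"

definition colinear ::
  "('k::comm_ring_1 \<Rightarrow> 'h::ring_1 \<Rightarrow> 'h) \<Rightarrow> ('h \<Rightarrow> ('h \<times> 'h) list)
   \<Rightarrow> ('k \<Rightarrow> 'a::ring_1 \<Rightarrow> 'a) \<Rightarrow> ('a \<Rightarrow> ('h \<times> 'a) list) \<Rightarrow> ('h \<Rightarrow> 'a) \<Rightarrow> bool" where
  "colinear sh Delta sa rho phi \<longleftrightarrow>
     module_hom sh sa phi \<and>
     (\<forall>h. teq2 sh sa (rho (phi h)) [(x, phi y). (x, y) \<leftarrow> Delta h])"

text \<open>A-integral for the Doi-Hopf datum (H, A, H): a k-linear gamma : H -> Hom(H, A)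
  satisfying (i) and (ii).  In (i), a_<-2> (x) a_<-1> (x) a_<0> is computed as
  (id (x) rho) rho(a), which equals (Delta (x) id) rho(a) by coassociativity.\<close>
definition A_integral ::
  "('k::comm_ring_1 \<Rightarrow> 'h::ring_1 \<Rightarrow> 'h) \<Rightarrow> ('h \<Rightarrow> ('h \<times> 'h) list)
   \<Rightarrow> ('k \<Rightarrow> 'a::ring_1 \<Rightarrow> 'a) \<Rightarrow> ('a \<Rightarrow> ('h \<times> 'a) list) \<Rightarrow> ('h \<Rightarrow> 'h \<Rightarrow> 'a) \<Rightarrow> bool" where
  "A_integral sh Delta sa rho gamma \<longleftrightarrow>
     (\<forall>c. module_hom sh sa (gamma c)) \<and>
     (\<forall>c c' d. gamma (c + c') d = gamma c d + gamma c' d) \<and>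
     (\<forall>r c d. gamma (sh r c) d = sa r (gamma c d)) \<and>
     (\<forall>a c d. sum_list [e * gamma (c * x) (d * y). (x, b) \<leftarrow> rho a, (y, e) \<leftarrow> rho b]
              = gamma c d * a) \<and>
     (\<forall>c d. teq2 sh sa [(c1, gamma c2 d). (c1, c2) \<leftarrow> Delta c]
                      [(d2 * y, e). (d1, d2) \<leftarrow> Delta d, (y, e) \<leftarrow> rho (gamma c d1)])"

end

theory Submission
  imports Defs "HOL-Library.Multiset"
begin

text \<open>Let gamma = gamma phi. By coassociativity of the coaction and x1 S(x2) = eps(x) 1,
  the left-hand side of condition (i) collapses to a phi(c S d), so (i) says exactly that
  phi(H) is central in A.

  Condition (ii) is an equation in H \<otimes> A. Since H is projective, a tensor is determined by
  its images under the slice maps f \<otimes> id, f a linear functional on H (dual basis lemma).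
  Colinearity, rho(phi h) = h1 \<otimes> phi(h2), together with the antipode cancellations
  h1 S(h2) \<otimes> h3 = S(h1) h2 \<otimes> h3 = 1 \<otimes> h, shows that the slices of (ii) agree for all c, d
  iff those of rho(phi h)(l \<otimes> 1) and (l \<otimes> 1) rho(phi h) agree for all h, l. As H \<otimes> A is
  generated by H \<otimes> 1 and 1 \<otimes> A, and commuting with 1 \<otimes> A is, after applying
  eps \<otimes> id, the centrality of phi(H) in A, conditions (i) and (ii) together say that
  rho(phi(H)) is central in H \<otimes> A.

  Finally, the sum of gamma(h1)(h2) equals phi(eps(h) 1) = eps(h) phi(1), which gives the
  normalisation statement.\<close>

section \<open>Bilinear maps on formal tensors\<close>

text \<open>Junk value 0 when u has infinite support.\<close>

definition linear_extension ::
  "('k::comm_ring_1 \<Rightarrow> 'm::ab_group_add \<Rightarrow> 'm) \<Rightarrow> ('p \<Rightarrow> 'm) \<Rightarrow> ('p \<Rightarrow> 'k) \<Rightarrow> 'm" where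
  "linear_extension sm g u = (\<Sum>p\<in>{p. u p \<noteq> 0}. sm (u p) (g p))"

lemma fsum_Nil: "fsum [] = (\<lambda>p. 0)"
  by (simp add: fsum_def fun_eq_iff)

lemma fsum_Cons: "fsum (x # xs) = (\<lambda>p. dl x p + fsum xs p)"
  by (auto simp: fsum_def dl_def fun_eq_iff)

lemma finite_support_dl: "finite {p. dl q p \<noteq> (0::'k::comm_ring_1)}"
  by (rule finite_subset[of _ "{q}"]) (auto simp: dl_def)

lemma finite_support_fsum: "finite {p. fsum xs p \<noteq> (0::'k::comm_ring_1)}"
  by (rule finite_subset[of _ "set xs"]) (auto simp: fsum_def, metis count_list_0_iff of_nat_0)

context module
begin

lemma linear_extension_superset:
  assumes "finite F" "{p. u p \<noteq> 0} \<subseteq> F"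
  shows "linear_extension scale g u = (\<Sum>p\<in>F. scale (u p) (g p))"
  unfolding linear_extension_def by (rule sum.mono_neutral_left) (use assms in auto)

lemma linear_extension_add:
  assumes "finite {p. u p \<noteq> 0}" "finite {p. v p \<noteq> 0}"
  shows "linear_extension scale g (\<lambda>p. u p + v p) = linear_extension scale g u + linear_extension scale g v"
proof -
  let ?F = "{p. u p \<noteq> 0} \<union> {p. v p \<noteq> 0}"
  have "linear_extension scale g (\<lambda>p. u p + v p) = (\<Sum>p\<in>?F. scale (u p + v p) (g p))"
    by (rule linear_extension_superset) (use assms in auto)
  also have "\<dots> = (\<Sum>p\<in>?F. scale (u p) (g p)) + (\<Sum>p\<in>?F. scale (v p) (g p))"
    by (simp add: scale_left_distrib sum.distrib)
  also have "\<dots> = linear_extension scale g u + linear_extension scale g v"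
    using assms by (simp add: linear_extension_superset[of ?F])
  finally show ?thesis .
qed

lemma linear_extension_scale:
  assumes "finite {p. u p \<noteq> 0}"
  shows "linear_extension scale g (\<lambda>p. c * u p) = scale c (linear_extension scale g u)"
proof -
  have "linear_extension scale g (\<lambda>p. c * u p) = (\<Sum>p\<in>{p. u p \<noteq> 0}. scale (c * u p) (g p))"
    by (rule linear_extension_superset) (use assms in auto)
  then show ?thesis
    by (simp add: linear_extension_def scale_sum_right)
qed

lemma linear_extension_diff:
  assumes "finite {p. u p \<noteq> 0}" "finite {p. v p \<noteq> 0}"
  shows "linear_extension scale g (\<lambda>p. u p - v p) = linear_extension scale g u - linear_extension scale g v"
  using linear_extension_add[OF assms(1), of "\<lambda>p. - v p"]
    linear_extension_scale[OF assms(2), where c = "- 1"] assms(2) by simp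

lemma linear_extension_dl: "linear_extension scale g (dl q) = g q"
proof -
  have "linear_extension scale g (dl q) = (\<Sum>p\<in>{q}. scale (dl q p) (g p))"
    by (rule linear_extension_superset) (auto simp: dl_def)
  then show ?thesis by (simp add: dl_def)
qed

lemma linear_extension_additivity_relation:
  assumes "g a = g b + g c"
  shows "finite {p. dl a p - dl b p - dl c p \<noteq> (0::'a)} \<and>
    linear_extension scale g (\<lambda>p. dl a p - dl b p - dl c p) = 0"
proof
  show "finite {p. dl a p - dl b p - dl c p \<noteq> (0::'a)}"
    by (rule finite_subset[of _ "{a, b, c}"]) (auto simp: dl_def)
  have "finite {p. dl a p - dl b p \<noteq> (0::'a)}"
    by (rule finite_subset[of _ "{a, b}"]) (auto simp: dl_def)
  then show "linear_extension scale g (\<lambda>p. dl a p - dl b p - dl c p) = 0"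
    using assms by (simp add: linear_extension_diff finite_support_dl linear_extension_dl)
qed

lemma linear_extension_homogeneity_relation:
  assumes "g a = scale c (g b)"
  shows "finite {p. dl a p - c * dl b p \<noteq> (0::'a)} \<and>
    linear_extension scale g (\<lambda>p. dl a p - c * dl b p) = 0"
proof
  show "finite {p. dl a p - c * dl b p \<noteq> (0::'a)}"
    by (rule finite_subset[of _ "{a, b}"]) (auto simp: dl_def)
  have "finite {p. c * dl b p \<noteq> (0::'a)}"
    by (rule finite_subset[of _ "{b}"]) (auto simp: dl_def)
  then show "linear_extension scale g (\<lambda>p. dl a p - c * dl b p) = 0"
    using assms
    by (simp add: linear_extension_diff linear_extension_scale finite_support_dl linear_extension_dl)
qed

lemma linear_extension_fsum: "linear_extension scale g (fsum xs :: _ \<Rightarrow> 'a) = (\<Sum>p\<leftarrow>xs. g p)"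
proof (induction xs)
  case Nil
  then show ?case by (simp add: linear_extension_def fsum_Nil)
next
  case (Cons x xs)
  then show ?case
    by (simp add: fsum_Cons linear_extension_add finite_support_dl finite_support_fsum
        linear_extension_dl)
qed

end

definition bilinear_map ::
  "('k::comm_ring_1 \<Rightarrow> 'x::ab_group_add \<Rightarrow> 'x) \<Rightarrow> ('k \<Rightarrow> 'y::ab_group_add \<Rightarrow> 'y)
   \<Rightarrow> ('k \<Rightarrow> 'm::ab_group_add \<Rightarrow> 'm) \<Rightarrow> ('x \<Rightarrow> 'y \<Rightarrow> 'm) \<Rightarrow> bool" where
  "bilinear_map sx sy sm f \<longleftrightarrow>
     (\<forall>x x' y. f (x + x') y = f x y + f x' y) \<and> (\<forall>x y y'. f x (y + y') = f x y + f x y') \<and>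
     (\<forall>c x y. f (sx c x) y = sm c (f x y)) \<and> (\<forall>c x y. f x (sy c y) = sm c (f x y))"

definition trilinear_map ::
  "('k::comm_ring_1 \<Rightarrow> 'x::ab_group_add \<Rightarrow> 'x) \<Rightarrow> ('k \<Rightarrow> 'y::ab_group_add \<Rightarrow> 'y)
   \<Rightarrow> ('k \<Rightarrow> 'z::ab_group_add \<Rightarrow> 'z) \<Rightarrow> ('k \<Rightarrow> 'm::ab_group_add \<Rightarrow> 'm)
   \<Rightarrow> ('x \<Rightarrow> 'y \<Rightarrow> 'z \<Rightarrow> 'm) \<Rightarrow> bool" where
  "trilinear_map sx sy sz sm f \<longleftrightarrow>
     (\<forall>x x' y z. f (x + x') y z = f x y z + f x' y z) \<and>
     (\<forall>x y y' z. f x (y + y') z = f x y z + f x y' z) \<and>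
     (\<forall>x y z z'. f x y (z + z') = f x y z + f x y z') \<and>
     (\<forall>c x y z. f (sx c x) y z = sm c (f x y z)) \<and> (\<forall>c x y z. f x (sy c y) z = sm c (f x y z)) \<and>
     (\<forall>c x y z. f x y (sz c z) = sm c (f x y z))"

lemma tzero2_linear_extension_bilinear:
  assumes m: "module sm" and f: "bilinear_map sx sy sm f" and u: "u \<in> tzero2 sx sy"
  shows "finite {p. u p \<noteq> 0} \<and> linear_extension sm (\<lambda>(x, y). f x y) u = 0"
  using u
proof (induction rule: tzero2.induct)
  case z
  then show ?case by (simp add: linear_extension_def)
next
  case (add u v)
  then show ?case
    by (auto simp: module.linear_extension_add[OF m]
        intro: finite_subset[of _ "{p. u p \<noteq> 0} \<union> {p. v p \<noteq> 0}"])
next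
  case (smult u c)
  then show ?case
    by (auto simp: module.linear_extension_scale[OF m] module.scale_zero_right[OF m]
        intro: finite_subset[of _ "{p. u p \<noteq> 0}"])
qed (rule module.linear_extension_additivity_relation[OF m]
    module.linear_extension_homogeneity_relation[OF m],
    use f in \<open>simp add: bilinear_map_def\<close>)+

lemma tzero3_linear_extension_trilinear:
  assumes m: "module sm" and f: "trilinear_map sx sy sz sm f" and u: "u \<in> tzero3 sx sy sz"
  shows "finite {p. u p \<noteq> 0} \<and> linear_extension sm (\<lambda>(x, y, z). f x y z) u = 0"
  using u
proof (induction rule: tzero3.induct)
  case z
  then show ?case by (simp add: linear_extension_def)
next
  case (add u v)
  then show ?case
    by (auto simp: module.linear_extension_add[OF m]
        intro: finite_subset[of _ "{p. u p \<noteq> 0} \<union> {p. v p \<noteq> 0}"])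
next
  case (smult u c)
  then show ?case
    by (auto simp: module.linear_extension_scale[OF m] module.scale_zero_right[OF m]
        intro: finite_subset[of _ "{p. u p \<noteq> 0}"])
qed (rule module.linear_extension_additivity_relation[OF m]
    module.linear_extension_homogeneity_relation[OF m],
    use f in \<open>simp add: trilinear_map_def\<close>)+

lemma teq2_sum_bilinear:
  assumes m: "module sm" and f: "bilinear_map sx sy sm f" and "teq2 sx sy xs ys"
  shows "(\<Sum>(x, y)\<leftarrow>xs. f x y) = (\<Sum>(x, y)\<leftarrow>ys. f x y)"
proof -
  have "linear_extension sm (\<lambda>(x, y). f x y) (\<lambda>p. fsum xs p - fsum ys p) = 0"
    using tzero2_linear_extension_bilinear[OF m f] assms(3) unfolding teq2_def by blast
  then show ?thesis
    by (simp add: module.linear_extension_diff[OF m] finite_support_fsum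
        module.linear_extension_fsum[OF m])
qed

lemma teq3_sum_trilinear:
  assumes m: "module sm" and f: "trilinear_map sx sy sz sm f" and "teq3 sx sy sz xs ys"
  shows "(\<Sum>(x, y, z)\<leftarrow>xs. f x y z) = (\<Sum>(x, y, z)\<leftarrow>ys. f x y z)"
proof -
  have "linear_extension sm (\<lambda>(x, y, z). f x y z) (\<lambda>p. fsum xs p - fsum ys p) = 0"
    using tzero3_linear_extension_trilinear[OF m f] assms(3) unfolding teq3_def by blast
  then show ?thesis
    by (simp add: module.linear_extension_diff[OF m] finite_support_fsum
        module.linear_extension_fsum[OF m])
qed


section \<open>Equality of tensors and separation by slices\<close>

lemma teq2I: "(\<lambda>p. fsum xs p - fsum ys p) = u \<Longrightarrow> u \<in> tzero2 sx sy \<Longrightarrow> teq2 sx sy xs ys"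
  by (simp add: teq2_def)

lemma teq2_refl: "teq2 sx sy xs xs"
  by (rule teq2I[where u = "\<lambda>p. 0"]) (auto intro: tzero2.z)

lemma teq2_sym:
  assumes "teq2 sx sy xs ys"
  shows "teq2 sx sy ys xs"
proof -
  have "(\<lambda>p. (- 1) * (fsum xs p - fsum ys p)) \<in> tzero2 sx sy"
    using assms unfolding teq2_def by (rule tzero2.smult)
  then show ?thesis by (auto simp: teq2_def)
qed

lemma teq2_trans [trans]:
  assumes "teq2 sx sy xs ys" "teq2 sx sy ys zs"
  shows "teq2 sx sy xs zs"
proof -
  have "(\<lambda>p. (fsum xs p - fsum ys p) + (fsum ys p - fsum zs p)) \<in> tzero2 sx sy"
    using assms unfolding teq2_def by (rule tzero2.add)
  then show ?thesis by (auto simp: teq2_def)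
qed

lemma teq2_append:
  assumes "teq2 sx sy xs ys" "teq2 sx sy xs' ys'"
  shows "teq2 sx sy (xs @ xs') (ys @ ys')"
proof -
  have "(\<lambda>p. (fsum xs p - fsum ys p) + (fsum xs' p - fsum ys' p)) \<in> tzero2 sx sy"
    using assms unfolding teq2_def by (rule tzero2.add)
  then show ?thesis by (auto simp: teq2_def fsum_def algebra_simps)
qed

lemma teq2_concat_map:
  assumes "\<And>x. x \<in> set xs \<Longrightarrow> teq2 sx sy (G x) (H x)"
  shows "teq2 sx sy (concat (map G xs)) (concat (map H xs))"
  using assms by (induction xs) (auto intro: teq2_append teq2_refl)

lemma teq2_map:
  assumes "\<And>x. x \<in> set xs \<Longrightarrow> teq2 sx sy [G x] [H x]"
  shows "teq2 sx sy (map G xs) (map H xs)"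
  using teq2_concat_map[of xs sx sy "\<lambda>x. [G x]" "\<lambda>x. [H x]"] assms by simp

lemma teq2_mset_eq:
  fixes sx :: "'k::comm_ring_1 \<Rightarrow> 'x::ab_group_add \<Rightarrow> 'x"
  assumes "mset xs = mset ys"
  shows "teq2 sx sy xs ys"
proof -
  have "(\<lambda>p. fsum xs p - fsum ys p) = (\<lambda>p. 0::'k)"
    using assms by (simp add: fsum_def fun_eq_iff flip: count_mset)
  then show ?thesis using teq2I tzero2.z by metis
qed

lemma mset_concat_map_Cons:
  "mset (concat (map (\<lambda>b. f b # g b) ys)) = mset (map f ys) + mset (concat (map g ys))"
  by (induction ys) auto

lemma mset_concat_map_swap:
  "mset (concat (map (\<lambda>a. map (F a) ys) xs)) = mset (concat (map (\<lambda>b. map (\<lambda>a. F a b) xs) ys))"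
proof (induction xs)
  case Nil
  then show ?case by (induction ys) auto
next
  case (Cons x xs)
  then show ?case by (simp add: mset_concat_map_Cons)
qed

lemma teq2_add_left: "teq2 sx sy [(x + x', y)] [(x, y), (x', y)]"
  by (rule teq2I[OF _ tzero2.addL[of x x' y]]) (simp add: fun_eq_iff fsum_Nil fsum_Cons)

lemma teq2_add_right: "teq2 sx sy [(x, y + y')] [(x, y), (x, y')]"
  by (rule teq2I[OF _ tzero2.addR[of x y y']]) (simp add: fun_eq_iff fsum_Nil fsum_Cons)

lemma teq2_zero_left: "teq2 sx sy [(0, y)] []"
  by (rule teq2I[OF _ tzero2.smult[OF tzero2.addL[of 0 0 y], of "- 1"]])
    (simp add: fun_eq_iff fsum_Nil fsum_Cons)

lemma teq2_zero_right: "teq2 sx sy [(x, 0)] []"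
  by (rule teq2I[OF _ tzero2.smult[OF tzero2.addR[of x 0 0], of "- 1"]])
    (simp add: fun_eq_iff fsum_Nil fsum_Cons)

lemma teq2_scale_swap: "teq2 sx sy [(sx c x, y)] [(x, sy c y)]"
  by (rule teq2I[OF _ tzero2.add[OF tzero2.scL[where c = c and x = x and y = y]
        tzero2.smult[OF tzero2.scR[where c = c and x = x and y = y], of "- 1"]]])
    (simp add: fun_eq_iff fsum_Nil fsum_Cons)

lemma teq2_sum_list_left: "teq2 sx sy [(\<Sum>x\<leftarrow>xs. g x, y)] (map (\<lambda>x. (g x, y)) xs)"
proof (induction xs)
  case Nil
  then show ?case by (simp add: teq2_zero_left)
next
  case (Cons a xs)
  have "teq2 sx sy [(g a + (\<Sum>x\<leftarrow>xs. g x), y)] ([(g a, y)] @ [(\<Sum>x\<leftarrow>xs. g x, y)])"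
    using teq2_add_left by simp
  also have "teq2 sx sy \<dots> ([(g a, y)] @ map (\<lambda>x. (g x, y)) xs)"
    by (rule teq2_append[OF teq2_refl Cons])
  finally show ?case by simp
qed

lemma teq2_sum_list_right: "teq2 sx sy [(x, \<Sum>y\<leftarrow>ys. g y)] (map (\<lambda>y. (x, g y)) ys)"
proof (induction ys)
  case Nil
  then show ?case by (simp add: teq2_zero_right)
next
  case (Cons a ys)
  have "teq2 sx sy [(x, g a + (\<Sum>y\<leftarrow>ys. g y))] ([(x, g a)] @ [(x, \<Sum>y\<leftarrow>ys. g y)])"
    using teq2_add_right by simp
  also have "teq2 sx sy \<dots> ([(x, g a)] @ map (\<lambda>y. (x, g y)) ys)"
    by (rule teq2_append[OF teq2_refl Cons])
  finally show ?case by simp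
qed

definition slice ::
  "('k::comm_ring_1 \<Rightarrow> 'a::ab_group_add \<Rightarrow> 'a) \<Rightarrow> ('h \<Rightarrow> 'k) \<Rightarrow> ('h \<times> 'a) list \<Rightarrow> 'a" where
  "slice sa f t = (\<Sum>(h, a)\<leftarrow>t. sa (f h) a)"

lemma slice_teq2:
  assumes ma: "module sa" and "teq2 sh sa t u" and f: "module_hom sh (*) f"
  shows "slice sa f t = slice sa f u"
proof -
  have "bilinear_map sh sa sa (\<lambda>h a. sa (f h) a)"
    using f ma unfolding bilinear_map_def
    by (simp add: module_hom.add module_hom.scale module.scale_left_distrib
        module.scale_right_distrib module.scale_scale mult_ac)
  from teq2_sum_bilinear[OF ma this assms(2)] show ?thesis
    by (simp add: slice_def)
qed

lemma teq2_dual_basis_expansion: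
  fixes sh :: "'k::comm_ring_1 \<Rightarrow> 'h::ab_group_add \<Rightarrow> 'h" and sa :: "'k \<Rightarrow> 'a::ab_group_add \<Rightarrow> 'a"
  assumes expansion: "\<And>p. p \<in> set t \<Longrightarrow> fst p = (\<Sum>x\<leftarrow>xs. sh (f x (fst p)) x)"
  shows "teq2 sh sa t (map (\<lambda>x. (x, slice sa (f x) t)) xs)"
proof -
  have "teq2 sh sa (concat (map (\<lambda>p. [p]) t))
      (concat (map (\<lambda>p. map (\<lambda>x. (sh (f x (fst p)) x, snd p)) xs) t))"
  proof (rule teq2_concat_map)
    fix p assume "p \<in> set t"
    have "teq2 sh sa [(\<Sum>x\<leftarrow>xs. sh (f x (fst p)) x, snd p)] (map (\<lambda>x. (sh (f x (fst p)) x, snd p)) xs)"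
      by (rule teq2_sum_list_left)
    then show "teq2 sh sa [p] (map (\<lambda>x. (sh (f x (fst p)) x, snd p)) xs)"
      unfolding expansion[OF \<open>p \<in> set t\<close>, symmetric] by simp
  qed
  also have "teq2 sh sa \<dots> (concat (map (\<lambda>p. map (\<lambda>x. (x, sa (f x (fst p)) (snd p))) xs) t))"
    by (rule teq2_concat_map, rule teq2_map, rule teq2_scale_swap)
  also have "teq2 sh sa \<dots> (concat (map (\<lambda>x. map (\<lambda>p. (x, sa (f x (fst p)) (snd p))) t) xs))"
    by (rule teq2_mset_eq, rule mset_concat_map_swap)
  also have "teq2 sh sa \<dots> (concat (map (\<lambda>x. [(x, slice sa (f x) t)]) xs))"
  proof (rule teq2_concat_map)
    fix x
    have "slice sa (f x) t = (\<Sum>p\<leftarrow>t. sa (f x (fst p)) (snd p))"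
      by (simp add: slice_def case_prod_beta')
    then show "teq2 sh sa (map (\<lambda>p. (x, sa (f x (fst p)) (snd p))) t) [(x, slice sa (f x) t)]"
      using teq2_sym[OF teq2_sum_list_right] by metis
  qed
  finally show ?thesis by simp
qed

text \<open>Projectivity enters only here. By the dual basis lemma every y is the finite sum of the
  f x y \<cdot> x with linear f x, so a tensor t equals the sum of the x \<otimes> slice (f x) t.\<close>

lemma teq2_if_slices_eq:
  fixes sh :: "'k::comm_ring_1 \<Rightarrow> 'h::ab_group_add \<Rightarrow> 'h" and sa :: "'k \<Rightarrow> 'a::ab_group_add \<Rightarrow> 'a"
  assumes proj: "projective_module sh"
    and slices_eq: "\<And>f. module_hom sh (*) f \<Longrightarrow> slice sa f t = slice sa f u"
  shows "teq2 sh sa t u"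
proof -
  obtain f :: "'h \<Rightarrow> 'h \<Rightarrow> 'k" where f_linear: "\<And>x. module_hom sh (*) (f x)"
    and f_finite: "\<And>y. finite {x. f x y \<noteq> 0}"
    and f_expansion: "\<And>y. y = (\<Sum>x\<in>{x. f x y \<noteq> 0}. sh (f x y) x)"
    using proj unfolding projective_module_def by blast
  have mh: "module sh" using proj unfolding projective_module_def by blast
  define X where "X = (\<Union>h \<in> fst ` (set t \<union> set u). {x. f x h \<noteq> 0})"
  have "finite X" unfolding X_def using f_finite by auto
  then obtain xs where xs: "set xs = X" "distinct xs" using finite_distinct_list by blast
  have expansion: "fst p = (\<Sum>x\<leftarrow>xs. sh (f x (fst p)) x)" if "p \<in> set t \<union> set u" for p
  proof -
    have "{x. f x (fst p) \<noteq> 0} \<subseteq> X" unfolding X_def using that by blast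
    then have "(\<Sum>x\<in>X. sh (f x (fst p)) x) = (\<Sum>x\<in>{x. f x (fst p) \<noteq> 0}. sh (f x (fst p)) x)"
      by (intro sum.mono_neutral_right) (use \<open>finite X\<close> module.scale_zero_left[OF mh] in auto)
    then show ?thesis
      using xs f_expansion by (simp add: sum_list_distinct_conv_sum_set)
  qed
  have "teq2 sh sa t (map (\<lambda>x. (x, slice sa (f x) t)) xs)"
    by (rule teq2_dual_basis_expansion) (use expansion in auto)
  also have "map (\<lambda>x. (x, slice sa (f x) t)) xs = map (\<lambda>x. (x, slice sa (f x) u)) xs"
    using slices_eq[OF f_linear] by simp
  also have "teq2 sh sa \<dots> u"
    by (rule teq2_sym, rule teq2_dual_basis_expansion) (use expansion in auto)
  finally show ?thesis .
qed

lemma teq2_iff_slices_eq: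
  assumes "projective_module sh" "module sa"
  shows "teq2 sh sa t u \<longleftrightarrow> (\<forall>f. module_hom sh (*) f \<longrightarrow> slice sa f t = slice sa f u)"
  using slice_teq2[OF assms(2)] teq2_if_slices_eq[OF assms(1)] by blast


lemma sum_pairs_additive:
  fixes g :: "'a::ab_group_add \<Rightarrow> 'b::ab_group_add"
  assumes "\<And>x y. g (x + y) = g x + g y"
  shows "g (\<Sum>(a, b)\<leftarrow>t. f a b) = (\<Sum>(a, b)\<leftarrow>t. g (f a b))"
proof -
  interpret additive g by unfold_locales (rule assms)
  show ?thesis by (induction t) (auto simp: add zero)
qed

lemma sum_pairs_mult_left: "c * (\<Sum>(a, b)\<leftarrow>t. f a b) = (\<Sum>(a, b)\<leftarrow>t. c * f a b :: 'r::ring)"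
  by (rule sum_pairs_additive) (simp add: distrib_left)

lemma sum_pairs_mult_right: "(\<Sum>(a, b)\<leftarrow>t. f a b) * c = (\<Sum>(a, b)\<leftarrow>t. f a b * c :: 'r::ring)"
  by (rule sum_pairs_additive[where g = "\<lambda>x. x * c"]) (simp add: distrib_right)

lemma sum_pairs_add:
  "(\<Sum>(a, b)\<leftarrow>t. f a b + g a b) = (\<Sum>(a, b)\<leftarrow>t. f a b) + (\<Sum>(a, b)\<leftarrow>t. g a b :: 'm::ab_group_add)"
  by (induction t) auto

lemma sum_pairs_swap:
  "(\<Sum>(a, b)\<leftarrow>xs. \<Sum>(c, d)\<leftarrow>ys. f a b c d) = (\<Sum>(c, d)\<leftarrow>ys. \<Sum>(a, b)\<leftarrow>xs. f a b c d :: 'm::ab_group_add)"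
  by (induction xs) (simp_all add: sum_pairs_add split: prod.split)

lemma sum_pairs_map:
  "(\<Sum>(a, b)\<leftarrow>map (\<lambda>(x, y). (F x y, G x y)) t. f a b) = (\<Sum>(x, y)\<leftarrow>t. f (F x y) (G x y))"
  by (induction t) auto

lemma sum_pairs_map_scale:
  assumes "\<And>c x y. f (s c x) y = sm c (f x y)"
  shows "(\<Sum>(a, b)\<leftarrow>map (\<lambda>(a, b). (s c a, b)) t. f a b) = (\<Sum>(a, b)\<leftarrow>t. sm c (f a b))"
  using assms by (induction t) auto

lemma sum_list_concat_map_pairs:
  "sum_list (concat (map (\<lambda>(x, b). G x b) t)) = (\<Sum>(x, b)\<leftarrow>t. sum_list (G x b))"
  by (induction t) auto

lemma sum_triples_concat_map:
  "(\<Sum>(x, y, z)\<leftarrow>concat (map (\<lambda>(a, b). map (\<lambda>(c, d). G a b c d) (L a b)) t). F x y z)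
   = (\<Sum>(a, b)\<leftarrow>t. \<Sum>(c, d)\<leftarrow>L a b. (\<lambda>(x, y, z). F x y z) (G a b c d))"
  by (induction t) (auto simp: map_concat o_def case_prod_beta')

lemma sum_triples_concat_map_Pair:
  "(\<Sum>(x, y, z)\<leftarrow>concat (map (\<lambda>(a, b). map (Pair a) (L a b)) t). F x y z)
   = (\<Sum>(a, b)\<leftarrow>t. \<Sum>(c, d)\<leftarrow>L a b. F a c d)"
  by (induction t) (auto simp: map_concat o_def case_prod_beta')

lemma sum_pairs_tmul2:
  "(\<Sum>(a, b)\<leftarrow>tmul2 t u. f a b) = (\<Sum>(x, y)\<leftarrow>t. \<Sum>(x', y')\<leftarrow>u. f (x * x') (y * y'))"
  unfolding tmul2_def by (induction t) (auto simp: map_concat o_def case_prod_beta')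

lemma bilinear_map_sum_left:
  fixes B :: "'x::ab_group_add \<Rightarrow> 'y::ab_group_add \<Rightarrow> 'm::ab_group_add"
  assumes "bilinear_map sx sy sm B"
  shows "B (\<Sum>(a, b)\<leftarrow>t. f a b) y = (\<Sum>(a, b)\<leftarrow>t. B (f a b) y)"
  by (rule sum_pairs_additive[where g = "\<lambda>x. B x y"]) (use assms in \<open>simp add: bilinear_map_def\<close>)

lemma bilinear_map_sum_right:
  fixes B :: "'x::ab_group_add \<Rightarrow> 'y::ab_group_add \<Rightarrow> 'm::ab_group_add"
  assumes "bilinear_map sx sy sm B"
  shows "B x (\<Sum>(a, b)\<leftarrow>t. f a b) = (\<Sum>(a, b)\<leftarrow>t. B x (f a b))"
  by (rule sum_pairs_additive) (use assms in \<open>simp add: bilinear_map_def\<close>)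

lemma slice_map:
  "slice sa f (map (\<lambda>(a, b). (F a b, G a b)) t) = (\<Sum>(a, b)\<leftarrow>t. sa (f (F a b)) (G a b))"
  by (induction t) (auto simp: slice_def)

lemma slice_concat_map:
  "slice sa f (concat (map (\<lambda>(a, b). L a b) t)) = (\<Sum>(a, b)\<leftarrow>t. slice sa f (L a b))"
  by (induction t) (auto simp: slice_def)

lemma slice_tmul2:
  "slice sa f (tmul2 t u) = (\<Sum>(x, y)\<leftarrow>t. \<Sum>(x', y')\<leftarrow>u. sa (f (x * x')) (y * y'))"
  unfolding slice_def by (rule sum_pairs_tmul2)


section \<open>Hopf algebras\<close>

locale hopf =
  fixes sh :: "'k::comm_ring_1 \<Rightarrow> 'h::ring_1 \<Rightarrow> 'h"
    and Delta :: "'h \<Rightarrow> ('h \<times> 'h) list" and eps :: "'h \<Rightarrow> 'k" and S :: "'h \<Rightarrow> 'h"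
  assumes hopf_algebra: "hopf_algebra sh Delta eps S"
begin

lemma module_H: "module sh"
  using hopf_algebra by (simp add: hopf_algebra_def k_algebra_def)

lemma mult_scale_left_H: "sh c x * y = sh c (x * y)"
  using hopf_algebra by (simp add: hopf_algebra_def k_algebra_def)

lemma mult_scale_right_H: "x * sh c y = sh c (x * y)"
  using hopf_algebra unfolding hopf_algebra_def k_algebra_def by metis

lemma Delta_add: "teq2 sh sh (Delta (x + y)) (Delta x @ Delta y)"
  using hopf_algebra by (simp add: hopf_algebra_def)

lemma Delta_scale: "teq2 sh sh (Delta (sh c x)) (map (\<lambda>(a, b). (sh c a, b)) (Delta x))"
  using hopf_algebra by (simp add: hopf_algebra_def)

lemma Delta_mult: "teq2 sh sh (Delta (x * y)) (tmul2 (Delta x) (Delta y))"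
  using hopf_algebra by (simp add: hopf_algebra_def)

lemma Delta_one: "teq2 sh sh (Delta 1) [(1, 1)]"
  using hopf_algebra by (simp add: hopf_algebra_def)

lemma coassoc:
  "teq3 sh sh sh [(a1, a2, b). (a, b) \<leftarrow> Delta h, (a1, a2) \<leftarrow> Delta a]
                 [(a, b1, b2). (a, b) \<leftarrow> Delta h, (b1, b2) \<leftarrow> Delta b]"
  using hopf_algebra by (simp add: hopf_algebra_def)

lemma counit_left: "(\<Sum>(a, b)\<leftarrow>Delta h. sh (eps a) b) = h"
  using hopf_algebra by (simp add: hopf_algebra_def)

lemma counit_right: "(\<Sum>(a, b)\<leftarrow>Delta h. sh (eps b) a) = h"
  using hopf_algebra by (simp add: hopf_algebra_def)

lemma eps_linear: "module_hom sh (*) eps"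
  using hopf_algebra by (simp add: hopf_algebra_def)

lemma eps_mult: "eps (x * y) = eps x * eps y"
  using hopf_algebra by (simp add: hopf_algebra_def)

lemma eps_one: "eps 1 = 1"
  using hopf_algebra by (simp add: hopf_algebra_def)

lemma S_linear: "module_hom sh sh S"
  using hopf_algebra by (simp add: hopf_algebra_def)

lemma antipode_left: "(\<Sum>(a, b)\<leftarrow>Delta h. S a * b) = sh (eps h) 1"
  using hopf_algebra by (simp add: hopf_algebra_def)

lemma antipode_right: "(\<Sum>(a, b)\<leftarrow>Delta h. a * S b) = sh (eps h) 1"
  using hopf_algebra by (simp add: hopf_algebra_def)

lemma eps_add: "eps (x + y) = eps x + eps y"
  using eps_linear by (rule module_hom.add)

lemma eps_scale: "eps (sh c x) = c * eps x"
  using eps_linear by (rule module_hom.scale)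

lemma S_add: "S (x + y) = S x + S y"
  using S_linear by (rule module_hom.add)

lemma S_scale: "S (sh c x) = sh c (S x)"
  using S_linear by (rule module_hom.scale)

lemma S_sum_pairs: "S (\<Sum>(a, b)\<leftarrow>t. f a b) = (\<Sum>(a, b)\<leftarrow>t. S (f a b))"
  by (rule sum_pairs_additive) (rule S_add)

lemma scale_sum_pairs_H: "sh c (\<Sum>(a, b)\<leftarrow>t. f a b) = (\<Sum>(a, b)\<leftarrow>t. sh c (f a b))"
  by (rule sum_pairs_additive) (rule module.scale_right_distrib[OF module_H])

lemmas linear_simps_H = distrib_left distrib_right S_add S_scale eps_add eps_scale
  mult_scale_left_H mult_scale_right_H
  module.scale_right_distrib[OF module_H] module.scale_left_distrib[OF module_H]
  module.scale_scale[OF module_H, symmetric]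

lemma linear_functional_simps:
  assumes "module_hom sh (*) f"
  shows "f (x + y) = f x + f y" "f (sh c x) = c * f x"
  using assms by (simp_all add: module_hom.add module_hom.scale)

lemma sum_Delta_add:
  assumes "module sm" "bilinear_map sh sh sm f"
  shows "(\<Sum>(a, b)\<leftarrow>Delta (x + y). f a b) = (\<Sum>(a, b)\<leftarrow>Delta x. f a b) + (\<Sum>(a, b)\<leftarrow>Delta y. f a b)"
  using teq2_sum_bilinear[OF assms Delta_add] by simp

lemma sum_Delta_scale:
  assumes m: "module sm" and f: "bilinear_map sh sh sm f"
  shows "(\<Sum>(a, b)\<leftarrow>Delta (sh c x). f a b) = sm c (\<Sum>(a, b)\<leftarrow>Delta x. f a b)"
proof -
  have "(\<Sum>(a, b)\<leftarrow>Delta (sh c x). f a b) = (\<Sum>(a, b)\<leftarrow>map (\<lambda>(a, b). (sh c a, b)) (Delta x). f a b)"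
    using teq2_sum_bilinear[OF m f Delta_scale] .
  also have "\<dots> = (\<Sum>(a, b)\<leftarrow>Delta x. sm c (f a b))"
    using f unfolding bilinear_map_def by (intro sum_pairs_map_scale) auto
  also have "\<dots> = sm c (\<Sum>(a, b)\<leftarrow>Delta x. f a b)"
    by (rule sum_pairs_additive[symmetric]) (rule module.scale_right_distrib[OF m])
  finally show ?thesis .
qed

lemma sum_Delta_mult:
  assumes "module sm" "bilinear_map sh sh sm f"
  shows "(\<Sum>(a, b)\<leftarrow>Delta (x * y). f a b)
    = (\<Sum>(x1, x2)\<leftarrow>Delta x. \<Sum>(y1, y2)\<leftarrow>Delta y. f (x1 * y1) (x2 * y2))"
  using teq2_sum_bilinear[OF assms Delta_mult[of x y]] by (simp add: sum_pairs_tmul2)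

lemma sum_Delta_coassoc:
  assumes "module sm" "trilinear_map sh sh sh sm F"
  shows "(\<Sum>(a, b)\<leftarrow>Delta h. \<Sum>(a1, a2)\<leftarrow>Delta a. F a1 a2 b)
    = (\<Sum>(a, b)\<leftarrow>Delta h. \<Sum>(b1, b2)\<leftarrow>Delta b. F a b1 b2)"
  using teq3_sum_trilinear[OF assms coassoc[of h]]
  by (simp add: sum_triples_concat_map sum_triples_concat_map_Pair)

lemma S_one: "S 1 = 1"
proof -
  have "bilinear_map sh sh sh (\<lambda>a b. S a * b)"
    unfolding bilinear_map_def by (simp add: linear_simps_H)
  from teq2_sum_bilinear[OF module_H this Delta_one] antipode_left[of 1] show ?thesis
    by (simp add: eps_one module.scale_one[OF module_H])
qed

lemma sum_Delta_antipode_cancel_right: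
  assumes m: "module sm" and B: "bilinear_map sh sh sm B"
  shows "(\<Sum>(d1, d2)\<leftarrow>Delta d. \<Sum>(u, v)\<leftarrow>Delta d1. B u (v * S d2)) = B d 1"
proof -
  have "trilinear_map sh sh sh sm (\<lambda>u v w. B u (v * S w))"
    using B unfolding trilinear_map_def bilinear_map_def by (simp add: linear_simps_H)
  then have "(\<Sum>(d1, d2)\<leftarrow>Delta d. \<Sum>(u, v)\<leftarrow>Delta d1. B u (v * S d2))
      = (\<Sum>(a, b)\<leftarrow>Delta d. \<Sum>(b1, b2)\<leftarrow>Delta b. B a (b1 * S b2))"
    by (rule sum_Delta_coassoc[OF m])
  also have "\<dots> = (\<Sum>(a, b)\<leftarrow>Delta d. B a (sh (eps b) 1))"
    by (simp add: bilinear_map_sum_right[OF B, symmetric] antipode_right)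
  also have "\<dots> = (\<Sum>(a, b)\<leftarrow>Delta d. B (sh (eps b) a) 1)"
    using B by (simp add: bilinear_map_def)
  also have "\<dots> = B d 1"
    by (simp add: bilinear_map_sum_left[OF B, symmetric] counit_right)
  finally show ?thesis .
qed

lemma sum_Delta_cancel_left:
  assumes m: "module sm" and B: "bilinear_map sh sh sm B" and mu: "bilinear_map sh sh sh mu"
    and mu_counit: "\<And>a. (\<Sum>(a1, a2)\<leftarrow>Delta a. mu a1 a2) = sh (eps a) 1"
  shows "(\<Sum>(d1, d2)\<leftarrow>Delta d. \<Sum>(x, y)\<leftarrow>Delta d2. B (c * mu d1 x) y) = B c d"
proof -
  have "trilinear_map sh sh sh sm (\<lambda>a1 a2 b. B (c * mu a1 a2) b)"
    using B mu unfolding trilinear_map_def bilinear_map_def by (simp add: linear_simps_H)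
  then have "(\<Sum>(d1, d2)\<leftarrow>Delta d. \<Sum>(x, y)\<leftarrow>Delta d2. B (c * mu d1 x) y)
      = (\<Sum>(a, b)\<leftarrow>Delta d. \<Sum>(a1, a2)\<leftarrow>Delta a. B (c * mu a1 a2) b)"
    using sum_Delta_coassoc[OF m] by simp
  also have "\<dots> = (\<Sum>(a, b)\<leftarrow>Delta d. B (c * sh (eps a) 1) b)"
    by (simp add: bilinear_map_sum_left[OF B, symmetric] sum_pairs_mult_left[symmetric] mu_counit)
  also have "\<dots> = (\<Sum>(a, b)\<leftarrow>Delta d. B c (sh (eps a) b))"
    using B by (simp add: bilinear_map_def mult_scale_right_H)
  also have "\<dots> = B c d"
    by (simp add: bilinear_map_sum_right[OF B, symmetric] counit_left)
  finally show ?thesis .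
qed

lemma sum_Delta_S_counit: "(\<Sum>(a, b)\<leftarrow>Delta h. sh (eps a) (S b)) = S h"
  using arg_cong[OF counit_left[of h], of S] by (simp add: S_sum_pairs S_scale)

lemma sum_Delta_antipode_left_mult:
  "(\<Sum>(u, v)\<leftarrow>Delta x. \<Sum>(p, q)\<leftarrow>Delta y. S (u * p) * (v * q)) = sh (eps x) (sh (eps y) 1)"
proof -
  have "bilinear_map sh sh sh (\<lambda>a b. S a * b)"
    unfolding bilinear_map_def by (simp add: linear_simps_H)
  from teq2_sum_bilinear[OF module_H this Delta_mult[of x y]] antipode_left[of "x * y"] show ?thesis
    by (simp add: sum_pairs_tmul2 eps_mult module.scale_scale[OF module_H])
qed

text \<open>Both sides equal the Sweedler sum of S(x1 y1) x2 y2 S(y3) S(x3).\<close>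

lemma S_mult: "S (x * y) = S y * S x"
proof -
  have expand_x: "S (x * y) = (\<Sum>(x1, x2)\<leftarrow>Delta x. \<Sum>(u, v)\<leftarrow>Delta x1. S (u * y) * v * S x2)"
    using sum_Delta_antipode_cancel_right[OF module_H, of "\<lambda>u v. S (u * y) * v" x]
    by (simp add: bilinear_map_def linear_simps_H mult.assoc)
  have expand_y: "S (u * y) * v = (\<Sum>(y1, y2)\<leftarrow>Delta y. \<Sum>(p, q)\<leftarrow>Delta y1. S (u * p) * v * q * S y2)"
    for u v
    using sum_Delta_antipode_cancel_right[OF module_H, of "\<lambda>p q. S (u * p) * (v * q)" y]
    by (simp add: bilinear_map_def linear_simps_H mult.assoc)
  have regroup: "(\<Sum>(u, v)\<leftarrow>Delta x1. (\<Sum>(y1, y2)\<leftarrow>Delta y. \<Sum>(p, q)\<leftarrow>Delta y1. S (u * p) * v * q * S y2) * S x2)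
     = (\<Sum>(y1, y2)\<leftarrow>Delta y. (\<Sum>(u, v)\<leftarrow>Delta x1. \<Sum>(p, q)\<leftarrow>Delta y1. S (u * p) * (v * q)) * S y2) * S x2"
    for x1 x2
    by (simp only: sum_pairs_mult_right mult.assoc) (rule sum_pairs_swap)
  have "S (x * y) = (\<Sum>(x1, x2)\<leftarrow>Delta x. \<Sum>(u, v)\<leftarrow>Delta x1.
           (\<Sum>(y1, y2)\<leftarrow>Delta y. \<Sum>(p, q)\<leftarrow>Delta y1. S (u * p) * v * q * S y2) * S x2)"
    unfolding expand_x expand_y ..
  also have "\<dots> = (\<Sum>(x1, x2)\<leftarrow>Delta x. (\<Sum>(y1, y2)\<leftarrow>Delta y. sh (eps x1) (sh (eps y1) 1) * S y2) * S x2)"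
    by (simp only: regroup sum_Delta_antipode_left_mult)
  also have "\<dots> = (\<Sum>(x1, x2)\<leftarrow>Delta x. sh (eps x1) (S y * S x2))"
    by (simp add: mult_scale_left_H scale_sum_pairs_H sum_pairs_mult_right
        flip: sum_Delta_S_counit[of y])
  also have "\<dots> = S y * S x"
    by (simp add: sum_pairs_mult_left mult_scale_right_H flip: sum_Delta_S_counit[of x])
  finally show ?thesis .
qed

end


locale hopf_comodule = hopf sh Delta eps S
  for sh :: "'k::comm_ring_1 \<Rightarrow> 'h::ring_1 \<Rightarrow> 'h" and Delta eps S +
  fixes sa :: "'k \<Rightarrow> 'a::ring_1 \<Rightarrow> 'a" and rho :: "'a \<Rightarrow> ('h \<times> 'a) list"
  assumes comodule_algebra: "comodule_algebra sh Delta eps sa rho"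
begin

lemma module_A: "module sa"
  using comodule_algebra by (simp add: comodule_algebra_def k_algebra_def)

lemma mult_scale_left_A: "sa c x * y = sa c (x * y)"
  using comodule_algebra by (simp add: comodule_algebra_def k_algebra_def)

lemma mult_scale_right_A: "x * sa c y = sa c (x * y)"
  using comodule_algebra unfolding comodule_algebra_def k_algebra_def by metis

lemma rho_coassoc:
  "teq3 sh sh sa [(x1, x2, b). (x, b) \<leftarrow> rho a, (x1, x2) \<leftarrow> Delta x]
                 [(x, y, e). (x, b) \<leftarrow> rho a, (y, e) \<leftarrow> rho b]"
  using comodule_algebra by (simp add: comodule_algebra_def)

lemma rho_counit: "(\<Sum>(x, b)\<leftarrow>rho a. sa (eps x) b) = a"
  using comodule_algebra by (simp add: comodule_algebra_def)

lemma scale_sum_pairs_A: "sa c (\<Sum>(a, b)\<leftarrow>t. f a b) = (\<Sum>(a, b)\<leftarrow>t. sa c (f a b))"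
  by (rule sum_pairs_additive) (rule module.scale_right_distrib[OF module_A])

lemma sum_pairs_scale_A: "sa (\<Sum>(a, b)\<leftarrow>t. f a b) v = (\<Sum>(a, b)\<leftarrow>t. sa (f a b) v)"
  by (rule sum_pairs_additive[where g = "\<lambda>c. sa c v"]) (rule module.scale_left_distrib[OF module_A])

lemma sum_rho_coassoc:
  assumes "module sm" "trilinear_map sh sh sa sm F"
  shows "(\<Sum>(x, b)\<leftarrow>rho a. \<Sum>(x1, x2)\<leftarrow>Delta x. F x1 x2 b)
    = (\<Sum>(x, b)\<leftarrow>rho a. \<Sum>(y, e)\<leftarrow>rho b. F x y e)"
  using teq3_sum_trilinear[OF assms rho_coassoc[of a]]
  by (simp add: sum_triples_concat_map sum_triples_concat_map_Pair)

end

locale hopf_colinear = hopf_comodule sh Delta eps S sa rho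
  for sh :: "'k::comm_ring_1 \<Rightarrow> 'h::ring_1 \<Rightarrow> 'h" and Delta eps S
    and sa :: "'k \<Rightarrow> 'a::ring_1 \<Rightarrow> 'a" and rho +
  fixes phi :: "'h \<Rightarrow> 'a"
  assumes colinear: "colinear sh Delta sa rho phi"
begin

lemma phi_linear: "module_hom sh sa phi"
  using colinear by (simp add: colinear_def)

lemma rho_phi: "teq2 sh sa (rho (phi h)) [(x, phi y). (x, y) \<leftarrow> Delta h]"
  using colinear by (simp add: colinear_def)

lemma phi_add: "phi (x + y) = phi x + phi y"
  using phi_linear by (rule module_hom.add)

lemma phi_scale: "phi (sh c x) = sa c (phi x)"
  using phi_linear by (rule module_hom.scale)

lemma phi_sum_pairs: "phi (\<Sum>(a, b)\<leftarrow>t. f a b) = (\<Sum>(a, b)\<leftarrow>t. phi (f a b))"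
  by (rule sum_pairs_additive) (rule phi_add)

lemmas linear_simps = linear_simps_H phi_add phi_scale mult_scale_left_A mult_scale_right_A
  module.scale_right_distrib[OF module_A] module.scale_left_distrib[OF module_A]
  module.scale_scale[OF module_A, symmetric]

lemma sum_rho_phi:
  assumes "module sm" "bilinear_map sh sa sm f"
  shows "(\<Sum>(x, b)\<leftarrow>rho (phi h). f x b) = (\<Sum>(x, y)\<leftarrow>Delta h. f x (phi y))"
  using teq2_sum_bilinear[OF assms rho_phi[of h]] by (simp add: sum_pairs_map o_def case_prod_beta')

end


section \<open>Centrality of the coaction on the image of phi\<close>

context hopf_colinear
begin

definition phi_central :: bool where
  "phi_central \<longleftrightarrow> (\<forall>h a. phi h * a = a * phi h)"

definition rho_phi_central :: bool where
  "rho_phi_central \<longleftrightarrow> (\<forall>h t. teq2 sh sa (tmul2 (rho (phi h)) t) (tmul2 t (rho (phi h))))"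

text \<open>By colinearity, these are the slices of rho (phi h) (l \<otimes> 1) and (l \<otimes> 1) rho (phi h).\<close>

definition slice_rho_phi_times :: "('h \<Rightarrow> 'k) \<Rightarrow> 'h \<Rightarrow> 'h \<Rightarrow> 'a" where
  "slice_rho_phi_times f h l = (\<Sum>(x, y)\<leftarrow>Delta h. sa (f (x * l)) (phi y))"

definition slice_times_rho_phi :: "('h \<Rightarrow> 'k) \<Rightarrow> 'h \<Rightarrow> 'h \<Rightarrow> 'a" where
  "slice_times_rho_phi f h l = (\<Sum>(x, y)\<leftarrow>Delta h. sa (f (l * x)) (phi y))"

definition rho_phi_commutes_with_H :: bool where
  "rho_phi_commutes_with_H \<longleftrightarrow>
     (\<forall>f h l. module_hom sh (*) f \<longrightarrow> slice_rho_phi_times f h l = slice_times_rho_phi f h l)"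

lemma slice_rho_phi_tmul2_pure:
  assumes f: "module_hom sh (*) f"
  shows "slice sa f (tmul2 (rho (phi h)) [(l, a)]) = slice_rho_phi_times f h l * a"
    and "slice sa f (tmul2 [(l, a)] (rho (phi h))) = (\<Sum>(x, y)\<leftarrow>Delta h. sa (f (l * x)) (a * phi y))"
proof -
  have "bilinear_map sh sa sa (\<lambda>x b. sa (f (x * l)) (b * a))"
    and "bilinear_map sh sa sa (\<lambda>x b. sa (f (l * x)) (a * b))"
    using f unfolding bilinear_map_def
    by (simp_all add: linear_simps linear_functional_simps module.scale_left_commute[OF module_A])
  then show "slice sa f (tmul2 (rho (phi h)) [(l, a)]) = slice_rho_phi_times f h l * a"
    and "slice sa f (tmul2 [(l, a)] (rho (phi h))) = (\<Sum>(x, y)\<leftarrow>Delta h. sa (f (l * x)) (a * phi y))"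
    by (simp_all add: slice_tmul2 sum_rho_phi[OF module_A] slice_rho_phi_times_def
        sum_pairs_mult_right mult_scale_left_A)
qed

lemma phi_central_if_rho_phi_central:
  assumes rho_phi_central
  shows phi_central
  unfolding phi_central_def
proof (intro allI)
  fix h a
  have "teq2 sh sa (tmul2 (rho (phi h)) [(1, a)]) (tmul2 [(1, a)] (rho (phi h)))"
    using assms unfolding rho_phi_central_def by blast
  from slice_teq2[OF module_A this eps_linear]
  have slices_eq: "(\<Sum>(x, b)\<leftarrow>rho (phi h). sa (eps x) (b * a))
      = (\<Sum>(x, b)\<leftarrow>rho (phi h). sa (eps x) (a * b))"
    by (simp add: slice_tmul2)
  have "phi h * a = (\<Sum>(x, b)\<leftarrow>rho (phi h). sa (eps x) b) * a"
    by (simp only: rho_counit)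
  also have "\<dots> = (\<Sum>(x, b)\<leftarrow>rho (phi h). sa (eps x) (a * b))"
    by (simp add: sum_pairs_mult_right mult_scale_left_A slices_eq)
  also have "\<dots> = a * (\<Sum>(x, b)\<leftarrow>rho (phi h). sa (eps x) b)"
    by (simp add: sum_pairs_mult_left mult_scale_right_A)
  also have "\<dots> = a * phi h"
    by (simp only: rho_counit)
  finally show "phi h * a = a * phi h" .
qed

lemma rho_phi_commutes_with_H_if_rho_phi_central:
  assumes rho_phi_central
  shows rho_phi_commutes_with_H
  unfolding rho_phi_commutes_with_H_def
proof (intro allI impI)
  fix f h l assume f: "module_hom sh (*) f"
  have "teq2 sh sa (tmul2 (rho (phi h)) [(l, 1)]) (tmul2 [(l, 1)] (rho (phi h)))"
    using assms unfolding rho_phi_central_def by blast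
  from slice_teq2[OF module_A this f] show "slice_rho_phi_times f h l = slice_times_rho_phi f h l"
    by (simp add: slice_rho_phi_tmul2_pure[OF f] slice_times_rho_phi_def)
qed

lemma rho_phi_central_if:
  assumes "projective_module sh" and phi_central and rho_phi_commutes_with_H
  shows rho_phi_central
  unfolding rho_phi_central_def
proof (intro allI)
  fix h t
  show "teq2 sh sa (tmul2 (rho (phi h)) t) (tmul2 t (rho (phi h)))"
    unfolding teq2_iff_slices_eq[OF assms(1) module_A]
  proof (intro allI impI)
    fix f assume f: "module_hom sh (*) f"
    have "slice sa f (tmul2 (rho (phi h)) t) = (\<Sum>(l, a)\<leftarrow>t. slice sa f (tmul2 (rho (phi h)) [(l, a)]))"
      by (simp add: slice_tmul2 sum_pairs_swap[where xs = "rho (phi h)"])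
    also have "\<dots> = (\<Sum>(l, a)\<leftarrow>t. slice_rho_phi_times f h l * a)"
      by (simp add: slice_rho_phi_tmul2_pure[OF f])
    also have "\<dots> = (\<Sum>(l, a)\<leftarrow>t. slice_times_rho_phi f h l * a)"
      using \<open>rho_phi_commutes_with_H\<close> f unfolding rho_phi_commutes_with_H_def by simp
    also have "\<dots> = (\<Sum>(l, a)\<leftarrow>t. slice sa f (tmul2 [(l, a)] (rho (phi h))))"
      using \<open>phi_central\<close> unfolding phi_central_def
      by (simp add: slice_rho_phi_tmul2_pure[OF f] slice_times_rho_phi_def sum_pairs_mult_right
          mult_scale_left_A)
    also have "\<dots> = slice sa f (tmul2 t (rho (phi h)))"
      by (simp add: slice_tmul2)
    finally show "slice sa f (tmul2 (rho (phi h)) t) = slice sa f (tmul2 t (rho (phi h)))" .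
  qed
qed

lemma rho_phi_central_iff:
  assumes "projective_module sh"
  shows "rho_phi_central \<longleftrightarrow> phi_central \<and> rho_phi_commutes_with_H"
  using phi_central_if_rho_phi_central rho_phi_commutes_with_H_if_rho_phi_central
    rho_phi_central_if[OF assms] by blast

end


section \<open>The integral conditions for gamma phi\<close>

context hopf_colinear
begin

lemma integral_condition_i_lhs_eq:
  "sum_list [e * phi (c * x * S (d * y)). (x, b) \<leftarrow> rho a, (y, e) \<leftarrow> rho b] = a * phi (c * S d)"
proof -
  have "trilinear_map sh sh sa sa (\<lambda>x y e. e * phi (c * x * S (d * y)))"
    unfolding trilinear_map_def by (simp add: linear_simps)
  then have "sum_list [e * phi (c * x * S (d * y)). (x, b) \<leftarrow> rho a, (y, e) \<leftarrow> rho b]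
      = (\<Sum>(x, b)\<leftarrow>rho a. \<Sum>(x1, x2)\<leftarrow>Delta x. b * phi (c * x1 * S (d * x2)))"
    by (simp add: sum_list_concat_map_pairs sum_rho_coassoc[OF module_A])
  also have "\<dots> = (\<Sum>(x, b)\<leftarrow>rho a. b * phi (c * (\<Sum>(x1, x2)\<leftarrow>Delta x. x1 * S x2) * S d))"
    by (simp add: S_mult sum_pairs_mult_left sum_pairs_mult_right phi_sum_pairs mult.assoc)
  also have "\<dots> = (\<Sum>(x, b)\<leftarrow>rho a. sa (eps x) b) * phi (c * S d)"
    by (simp add: antipode_right linear_simps sum_pairs_mult_right)
  also have "\<dots> = a * phi (c * S d)"
    by (simp only: rho_counit)
  finally show ?thesis .
qed

lemma integral_condition_i_iff:
  "(\<forall>a c d. sum_list [e * phi (c * x * S (d * y)). (x, b) \<leftarrow> rho a, (y, e) \<leftarrow> rho b]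
      = phi (c * S d) * a) \<longleftrightarrow> phi_central"
  unfolding phi_central_def integral_condition_i_lhs_eq
  by (metis S_one mult.right_neutral)

text \<open>The slices of the two sides of condition (ii) for gamma phi.\<close>

definition slice_integral_lhs :: "('h \<Rightarrow> 'k) \<Rightarrow> 'h \<Rightarrow> 'h \<Rightarrow> 'a" where
  "slice_integral_lhs f c d = (\<Sum>(c1, c2)\<leftarrow>Delta c. sa (f c1) (phi (c2 * S d)))"

definition slice_integral_rhs :: "('h \<Rightarrow> 'k) \<Rightarrow> 'h \<Rightarrow> 'h \<Rightarrow> 'a" where
  "slice_integral_rhs f c d =
     (\<Sum>(d1, d2)\<leftarrow>Delta d. \<Sum>(y, e)\<leftarrow>rho (phi (c * S d1)). sa (f (d2 * y)) e)"

lemma bilinear_slice_times_rho_phi: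
  assumes f: "module_hom sh (*) f"
  shows "bilinear_map sh sh sa (slice_times_rho_phi f)"
proof -
  have B: "bilinear_map sh sh sa (\<lambda>x y. sa (f (l * x)) (phi y))" for l
    using f unfolding bilinear_map_def
    by (simp add: linear_simps linear_functional_simps[OF f] module.scale_left_commute[OF module_A])
  show ?thesis
    unfolding bilinear_map_def slice_times_rho_phi_def
    by (simp add: sum_Delta_add[OF module_A B] sum_Delta_scale[OF module_A B] linear_simps
        linear_functional_simps[OF f] sum_pairs_add scale_sum_pairs_A)
qed

lemma bilinear_slice_integral_lhs:
  assumes f: "module_hom sh (*) f"
  shows "bilinear_map sh sh sa (slice_integral_lhs f)"
proof -
  have B: "bilinear_map sh sh sa (\<lambda>c1 c2. sa (f c1) (phi (c2 * S d)))" for d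
    using f unfolding bilinear_map_def
    by (simp add: linear_simps linear_functional_simps[OF f] module.scale_left_commute[OF module_A])
  show ?thesis
    unfolding bilinear_map_def slice_integral_lhs_def
    by (simp add: sum_Delta_add[OF module_A B] sum_Delta_scale[OF module_A B] linear_simps
        linear_functional_simps[OF f] sum_pairs_add scale_sum_pairs_A module.scale_left_commute[OF module_A])
qed

lemma slice_integral_rhs_eq:
  assumes f: "module_hom sh (*) f"
  shows "slice_integral_rhs f c d = (\<Sum>(d1, d2)\<leftarrow>Delta d. slice_times_rho_phi f (c * S d1) d2)"
proof -
  have "bilinear_map sh sa sa (\<lambda>y e. sa (f (l * y)) e)" for l
    using f unfolding bilinear_map_def
    by (simp add: linear_simps linear_functional_simps[OF f] module.scale_left_commute[OF module_A])
  then show ?thesis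
    unfolding slice_integral_rhs_def slice_times_rho_phi_def by (simp add: sum_rho_phi[OF module_A])
qed

lemma sum_slice_integral_lhs:
  assumes f: "module_hom sh (*) f"
  shows "(\<Sum>(p1, p2)\<leftarrow>Delta p. slice_integral_lhs f (k * p1) p2) = slice_rho_phi_times f k p"
proof -
  have "bilinear_map sh sh sa (\<lambda>c1 c2. sa (f c1) (phi (c2 * S d)))" for d
    using f unfolding bilinear_map_def
    by (simp add: linear_simps linear_functional_simps[OF f] module.scale_left_commute[OF module_A])
  then have "(\<Sum>(p1, p2)\<leftarrow>Delta p. slice_integral_lhs f (k * p1) p2)
      = (\<Sum>(p1, p2)\<leftarrow>Delta p. \<Sum>(x, y)\<leftarrow>Delta k. \<Sum>(x', y')\<leftarrow>Delta p1. sa (f (x * x')) (phi (y * y' * S p2)))"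
    unfolding slice_integral_lhs_def by (simp add: sum_Delta_mult[OF module_A])
  also have "\<dots> = (\<Sum>(x, y)\<leftarrow>Delta k. \<Sum>(p1, p2)\<leftarrow>Delta p. \<Sum>(x', y')\<leftarrow>Delta p1. sa (f (x * x')) (phi (y * y' * S p2)))"
    by (rule sum_pairs_swap)
  also have "\<dots> = (\<Sum>(x, y)\<leftarrow>Delta k. \<Sum>(a, b)\<leftarrow>Delta p. \<Sum>(b1, b2)\<leftarrow>Delta b. sa (f (x * a)) (phi (y * (b1 * S b2))))"
  proof -
    have "trilinear_map sh sh sh sa (\<lambda>a1 a2 b. sa (f (x * a1)) (phi (y * a2 * S b)))" for x y
      using f unfolding trilinear_map_def
      by (simp add: linear_simps linear_functional_simps[OF f] module.scale_left_commute[OF module_A])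
    then show ?thesis
      using sum_Delta_coassoc[OF module_A] by (simp add: mult.assoc)
  qed
  also have "\<dots> = (\<Sum>(x, y)\<leftarrow>Delta k. \<Sum>(a, b)\<leftarrow>Delta p.
      sa (f (x * a)) (phi (y * (\<Sum>(b1, b2)\<leftarrow>Delta b. b1 * S b2))))"
    by (simp add: sum_pairs_mult_left phi_sum_pairs scale_sum_pairs_A)
  also have "\<dots> = (\<Sum>(x, y)\<leftarrow>Delta k. \<Sum>(a, b)\<leftarrow>Delta p. sa (eps b) (sa (f (x * a)) (phi y)))"
    by (simp add: antipode_right linear_simps module.scale_left_commute[OF module_A])
  also have "\<dots> = (\<Sum>(x, y)\<leftarrow>Delta k. sa (f (x * p)) (phi y))"
  proof -
    have "(\<Sum>(a, b)\<leftarrow>Delta p. sa (eps b) (sa (f (x * a)) (phi y))) = sa (f (x * p)) (phi y)" for x y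
    proof -
      have "sa (f (x * p)) (phi y) = sa (f (x * (\<Sum>(a, b)\<leftarrow>Delta p. sh (eps b) a))) (phi y)"
        by (simp only: counit_right)
      also have "\<dots> = (\<Sum>(a, b)\<leftarrow>Delta p. sa (eps b) (sa (f (x * a)) (phi y)))"
        by (simp add: sum_pairs_mult_left sum_pairs_additive[where g = f, OF linear_functional_simps(1)[OF f]]
            sum_pairs_scale_A mult_scale_right_H linear_functional_simps[OF f]
            module.scale_scale[OF module_A, symmetric])
      finally show ?thesis ..
    qed
    then show ?thesis by simp
  qed
  finally show ?thesis unfolding slice_rho_phi_times_def .
qed

lemma sum_slice_integral_rhs:
  assumes f: "module_hom sh (*) f"
  shows "(\<Sum>(p1, p2)\<leftarrow>Delta p. slice_integral_rhs f (k * p1) p2) = slice_times_rho_phi f k p"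
proof -
  have "bilinear_map sh sh sh (\<lambda>a b. a * S b)"
    unfolding bilinear_map_def by (simp add: linear_simps)
  from sum_Delta_cancel_left[OF module_A bilinear_slice_times_rho_phi[OF f] this antipode_right]
  show ?thesis
    by (simp add: slice_integral_rhs_eq[OF f] mult.assoc)
qed

lemma slice_integral_lhs_eq:
  assumes f: "module_hom sh (*) f"
  shows "slice_integral_lhs f c d = (\<Sum>(d1, d2)\<leftarrow>Delta d. slice_rho_phi_times f (c * S d1) d2)"
proof -
  have "bilinear_map sh sh sh (\<lambda>a b. S a * b)"
    unfolding bilinear_map_def by (simp add: linear_simps)
  from sum_Delta_cancel_left[OF module_A bilinear_slice_integral_lhs[OF f] this antipode_left]
  show ?thesis
    by (simp add: sum_slice_integral_lhs[OF f, symmetric] mult.assoc)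
qed

lemma integral_condition_ii_iff:
  assumes "projective_module sh"
  shows "(\<forall>c d. teq2 sh sa [(c1, phi (c2 * S d)). (c1, c2) \<leftarrow> Delta c]
      [(d2 * y, e). (d1, d2) \<leftarrow> Delta d, (y, e) \<leftarrow> rho (phi (c * S d1))])
    \<longleftrightarrow> rho_phi_commutes_with_H"
proof -
  have "(\<forall>c d. teq2 sh sa [(c1, phi (c2 * S d)). (c1, c2) \<leftarrow> Delta c]
      [(d2 * y, e). (d1, d2) \<leftarrow> Delta d, (y, e) \<leftarrow> rho (phi (c * S d1))])
    \<longleftrightarrow> (\<forall>c d f. module_hom sh (*) f \<longrightarrow> slice_integral_lhs f c d = slice_integral_rhs f c d)"
    by (simp add: teq2_iff_slices_eq[OF assms module_A] slice_map slice_concat_map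
        slice_integral_lhs_def slice_integral_rhs_def)
  also have "\<dots> \<longleftrightarrow> rho_phi_commutes_with_H"
    unfolding rho_phi_commutes_with_H_def
  proof (intro iffI allI impI)
    fix f h l assume "\<forall>c d f. module_hom sh (*) f \<longrightarrow> slice_integral_lhs f c d = slice_integral_rhs f c d"
      and f: "module_hom sh (*) f"
    then show "slice_rho_phi_times f h l = slice_times_rho_phi f h l"
      by (simp flip: sum_slice_integral_lhs[OF f] sum_slice_integral_rhs[OF f])
  next
    fix c d f assume "\<forall>f h l. module_hom sh (*) f \<longrightarrow> slice_rho_phi_times f h l = slice_times_rho_phi f h l"
      and f: "module_hom sh (*) f"
    then show "slice_integral_lhs f c d = slice_integral_rhs f c d"
      by (simp add: slice_integral_lhs_eq[OF f] slice_integral_rhs_eq[OF f])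
  qed
  finally show ?thesis .
qed

lemma A_integral_gamma_iff:
  assumes "projective_module sh"
  shows "A_integral sh Delta sa rho (\<lambda>h l. phi (h * S l)) \<longleftrightarrow> rho_phi_central"
proof -
  have "\<forall>c. module_hom sh sa (\<lambda>l. phi (c * S l))"
    and "\<forall>c c' d. phi ((c + c') * S d) = phi (c * S d) + phi (c' * S d)"
    and "\<forall>r c d. phi (sh r c * S d) = sa r (phi (c * S d))"
    using module_H module_A unfolding module_hom_def module_hom_axioms_def
    by (simp_all add: linear_simps)
  then show ?thesis
    unfolding A_integral_def
    by (simp add: integral_condition_i_iff integral_condition_ii_iff[OF assms]
        rho_phi_central_iff[OF assms])
qed

lemma gamma_normalized_iff:
  "phi 1 = 1 \<longleftrightarrow> (\<forall>h. (\<Sum>(x, y)\<leftarrow>Delta h. phi (x * S y)) = sa (eps h) 1)"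
proof -
  have normalization: "(\<Sum>(x, y)\<leftarrow>Delta h. phi (x * S y)) = sa (eps h) (phi 1)" for h
    by (simp add: antipode_right phi_scale flip: phi_sum_pairs)
  show ?thesis
  proof
    assume "\<forall>h. (\<Sum>(x, y)\<leftarrow>Delta h. phi (x * S y)) = sa (eps h) 1"
    then have "sa (eps 1) (phi 1) = sa (eps 1) 1"
      by (simp only: normalization)
    then show "phi 1 = 1"
      by (simp add: eps_one module.scale_one[OF module_A])
  qed (simp add: normalization)
qed

end

theorem theorem3p1p2:
  fixes sh :: "'k::comm_ring_1 \<Rightarrow> 'h::ring_1 \<Rightarrow> 'h"
    and sa :: "'k \<Rightarrow> 'a::ring_1 \<Rightarrow> 'a"
    and Delta :: "'h \<Rightarrow> ('h \<times> 'h) list" and eps :: "'h \<Rightarrow> 'k" and S :: "'h \<Rightarrow> 'h"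
    and rho :: "'a \<Rightarrow> ('h \<times> 'a) list" and phi :: "'h \<Rightarrow> 'a"
  assumes "hopf_algebra sh Delta eps S"
    and "projective_module sh"
    and "comodule_algebra sh Delta eps sa rho"
    and "colinear sh Delta sa rho phi"
  shows "(A_integral sh Delta sa rho (\<lambda>h l. phi (h * S l)) \<longleftrightarrow>
            (\<forall>h t. teq2 sh sa (tmul2 (rho (phi h)) t) (tmul2 t (rho (phi h)))))
       \<and> (phi 1 = 1 \<longleftrightarrow>
            (\<forall>h. sum_list (map (\<lambda>(x, y). phi (x * S y)) (Delta h)) = sa (eps h) 1))"
proof -
  interpret hopf_colinear sh Delta eps S sa rho phi
    using assms(1,3,4) by unfold_locales
  show ?thesis
    using A_integral_gamma_iff[OF assms(2)] gamma_normalized_iff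
    unfolding rho_phi_central_def by blast
qed

end
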